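(* Under the standing setting and assumptions (A1)–(A3) described in the context, the following are equivalent: (a) $\mathcal R$ is upper semicontinuous at every point of $\mathcal X$; (b) $\mathcal R(\mathcal K)$ is bounded in $\mathcal M$ for every compact $\mathcal K\subset\mathcal X$; (c) for every $X\in\mathcal X$, every sequence $X_n\to X$ in $\mathcal X$ and every choice $Z_n\in\mathcal R(X_n)$, there exist $Z\in\mathcal R(X)$ and a subsequence $(Z_{n_k})$ with $Z_{n_k}\to Z$.
   Context: Let $\mathcal X$ be a Hausdorff, first countable, locally convex topological vector space over $\mathbb R$, partially ordered by a partial order $\geq$ with positive cone $\mathcal X_+=\{X\in\mathcal X: X\geq 0\}$. Let $\mathcal M\subset\mathcal X$ be a vector subspace with $1<\dim\mathcal M<\infty$, carrying the relative topology (boundedness in $\mathcal M$ refers to any norm on $\mathcal M$), and let $\pi:\mathcal M\to\mathbb R$ be linear. Standing assumptions: (A1) there is $U\in\mathcal M\cap\mathcal X_+$ with $\pi(U)=1$; (A2) $\mathcal A\subsetneq\mathcal X$ is closed, contains $0$, and satisfies $\mathcal A+\mathcal X_+\subset\mathcal A$; (A3) the map $\rho(X)=\inf\{\pi(Z): Z\in\mathcal M,\ X+Z\in\mathcal A\}$ is finitely valued and continuous on $\mathcal X$. The optimal payoff map is $\mathcal R(X)=\{Z\in\mathcal M: X+Z\in\mathcal A,\ \pi(Z)=\rho(X)\}$ and $\mathcal R(\mathcal K)=\bigcup_{X\in\mathcal K}\mathcal R(X)$. $\mathcal R$ is upper semicontinuous at $X$ if for every open $\mathcal U\subset\mathcal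 M$ with $\mathcal R(X)\subset\mathcal U$ there is an open neighborhood $\mathcal U_X$ of $X$ with $\mathcal R(Y)\subset\mathcal U$ for all $Y\in\mathcal U_X$. *)

theory Defs
  imports "HOL-Analysis.Analysis"
begin

definition is_tvs :: "'a::{real_vector,topological_space} itself \<Rightarrow> bool" where
  "is_tvs _ \<longleftrightarrow>
     continuous_on UNIV (\<lambda>p::'a \<times> 'a. fst p + snd p) \<and>
     continuous_on UNIV (\<lambda>p::real \<times> 'a. fst p *\<^sub>R snd p)"

definition is_locally_convex :: "'a::{real_vector,topological_space} itself \<Rightarrow> bool" where
  "is_locally_convex _ \<longleftrightarrow>
     (\<forall>U::'a set. open U \<and> 0 \<in> U \<longrightarrow> (\<exists>V. open V \<and> convex V \<and> 0 \<in> V \<and> V \<subseteq> U))"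

definition is_norm_on :: "'a::real_vector set \<Rightarrow> ('a \<Rightarrow> real) \<Rightarrow> bool" where
  "is_norm_on M nM \<longleftrightarrow>
     (\<forall>x\<in>M. 0 \<le> nM x \<and> (nM x = 0 \<longleftrightarrow> x = 0)) \<and>
     (\<forall>x\<in>M. \<forall>y\<in>M. nM (x + y) \<le> nM x + nM y) \<and>
     (\<forall>x\<in>M. \<forall>c::real. nM (c *\<^sub>R x) = \<bar>c\<bar> * nM x)"

definition linear_on_sub :: "'a::real_vector set \<Rightarrow> ('a \<Rightarrow> real) \<Rightarrow> bool" where
  "linear_on_sub M \<pi> \<longleftrightarrow>
     (\<forall>x\<in>M. \<forall>y\<in>M. \<pi> (x + y) = \<pi> x + \<pi> y) \<and>
     (\<forall>x\<in>M. \<forall>c::real. \<pi> (c *\<^sub>R x) = c * \<pi> x)"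

definition adm_prices :: "'a::real_vector set \<Rightarrow> ('a \<Rightarrow> real) \<Rightarrow> 'a set \<Rightarrow> 'a \<Rightarrow> real set" where
  "adm_prices M \<pi> A X = {\<pi> Z | Z. Z \<in> M \<and> X + Z \<in> A}"

definition rho :: "'a::real_vector set \<Rightarrow> ('a \<Rightarrow> real) \<Rightarrow> 'a set \<Rightarrow> 'a \<Rightarrow> real" where
  "rho M \<pi> A X = Inf (adm_prices M \<pi> A X)"

definition optR :: "'a::real_vector set \<Rightarrow> ('a \<Rightarrow> real) \<Rightarrow> 'a set \<Rightarrow> 'a \<Rightarrow> 'a set" where
  "optR M \<pi> A X = {Z \<in> M. X + Z \<in> A \<and> \<pi> Z = rho M \<pi> A X}"

definition usc_at :: "'a::{real_vector,topological_space} set \<Rightarrow> ('a \<Rightarrow> 'a set) \<Rightarrow> 'a \<Rightarrow> bool" where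
  "usc_at M R X \<longleftrightarrow>
     (\<forall>U. openin (top_of_set M) U \<and> R X \<subseteq> U \<longrightarrow>
        (\<exists>V. open V \<and> X \<in> V \<and> (\<forall>Y\<in>V. R Y \<subseteq> U)))"

end

(*
  In a Hausdorff topological vector space every finite-dimensional subspace M carries its
  Euclidean topology: a sequence in M converges iff its coordinates in a basis do.  Hence
  convergent sequences in M are norm-bounded, norm-bounded ones have convergent subsequences, and
  the price functional is continuous on M.

  (b) implies (c): optimal payoffs along X_n -> X lie in R(K) for the compact K = {X} u {X_n},
  so a subsequence converges, and its limit is optimal at X since A is closed and rho and pi are
  continuous.  (c) implies (b) and (a) by the usual sequential arguments (first countability).
  (a) implies (b): from an unbounded R(K) one gets X_n -> X and Z_n in R(X_n) outside R(X) with
  norms tending to infinity.  Such a sequence has no accumulation point in M, so the complement of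
  its range is a relatively open neighbourhood of R(X) containing no Z_n, against upper
  semicontinuity.  Avoiding R(X) is arranged by dropping finitely many terms if R(X) is bounded;
  if it is not, cash additivity rho(X + tU) = rho(X) - t turns elements Z of R(X) of large norm
  into Z - U/n in R(X + U/n), which have the wrong price to lie in R(X).
*)
theory Submission
  imports Defs
begin

lemma tvs_tendsto_add:
  fixes f g :: "'b \<Rightarrow> 'a::{real_vector,t2_space}"
  assumes "is_tvs TYPE('a)" "(f \<longlongrightarrow> a) F" "(g \<longlongrightarrow> b) F"
  shows "((\<lambda>x. f x + g x) \<longlongrightarrow> a + b) F"
proof -
  have "isCont (\<lambda>p::'a \<times> 'a. fst p + snd p) (a, b)"
    using assms(1) unfolding is_tvs_def by (simp add: continuous_on_eq_continuous_at)
  from isCont_tendsto_compose[OF this tendsto_Pair[OF assms(2,3)]] show ?thesis by simp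
qed

lemma tvs_tendsto_scaleR:
  fixes f :: "'b \<Rightarrow> real" and g :: "'b \<Rightarrow> 'a::{real_vector,t2_space}"
  assumes "is_tvs TYPE('a)" "(f \<longlongrightarrow> a) F" "(g \<longlongrightarrow> b) F"
  shows "((\<lambda>x. f x *\<^sub>R g x) \<longlongrightarrow> a *\<^sub>R b) F"
proof -
  have "isCont (\<lambda>p::real \<times> 'a. fst p *\<^sub>R snd p) (a, b)"
    using assms(1) unfolding is_tvs_def by (simp add: continuous_on_eq_continuous_at)
  from isCont_tendsto_compose[OF this tendsto_Pair[OF assms(2,3)]] show ?thesis by simp
qed

lemma tvs_tendsto_diff:
  fixes f g :: "'b \<Rightarrow> 'a::{real_vector,t2_space}"
  assumes "is_tvs TYPE('a)" "(f \<longlongrightarrow> a) F" "(g \<longlongrightarrow> b) F"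
  shows "((\<lambda>x. f x - g x) \<longlongrightarrow> a - b) F"
  using tvs_tendsto_add[OF assms(1,2) tvs_tendsto_scaleR[OF assms(1) tendsto_const assms(3)],
      of "- 1"]
  by simp

lemma tvs_tendsto_sum:
  fixes f :: "'c \<Rightarrow> 'b \<Rightarrow> 'a::{real_vector,t2_space}"
  assumes "is_tvs TYPE('a)" "finite S" "\<And>i. i \<in> S \<Longrightarrow> (f i \<longlongrightarrow> a i) F"
  shows "((\<lambda>x. \<Sum>i\<in>S. f i x) \<longlongrightarrow> (\<Sum>i\<in>S. a i)) F"
  using assms(2,3)
  by (induction S rule: finite_induct) (simp_all add: tvs_tendsto_add[OF assms(1)])

section \<open>Finite-dimensional subspaces\<close>

lemma is_norm_on_sum_le:
  assumes "is_norm_on M n" "subspace M" "finite S" "\<And>i. i \<in> S \<Longrightarrow> x i \<in> M"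
  shows "n (\<Sum>i\<in>S. x i) \<le> (\<Sum>i\<in>S. n (x i))"
  using assms(3,4)
proof (induction S rule: finite_induct)
  case empty
  have "n (0 *\<^sub>R 0) = \<bar>0\<bar> * n 0"
    using assms(1,2) unfolding is_norm_on_def by (blast intro: subspace_0)
  then show ?case by simp
next
  case (insert i S)
  then have "n (x i + (\<Sum>j\<in>S. x j)) \<le> n (x i) + n (\<Sum>j\<in>S. x j)"
    using assms(1,2) unfolding is_norm_on_def by (simp add: subspace_sum)
  with insert show ?case by simp
qed

lemma linear_on_sub_sum:
  assumes "linear_on_sub M p" "subspace M" "finite S" "\<And>i. i \<in> S \<Longrightarrow> x i \<in> M"
  shows "p (\<Sum>i\<in>S. x i) = (\<Sum>i\<in>S. p (x i))"
  using assms(3,4)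
proof (induction S rule: finite_induct)
  case empty
  have "p (0 *\<^sub>R 0) = 0 * p 0"
    using assms(1,2) unfolding linear_on_sub_def by (blast intro: subspace_0)
  then show ?case by simp
next
  case (insert i S)
  then have "p (x i + (\<Sum>j\<in>S. x j)) = p (x i) + p (\<Sum>j\<in>S. x j)"
    using assms(1,2) unfolding linear_on_sub_def by (simp add: subspace_sum)
  with insert show ?case by simp
qed

lemma bounded_coordinates_convergent_subseq:
  fixes c :: "nat \<Rightarrow> 'c \<Rightarrow> real"
  assumes "finite S" "\<And>k b. b \<in> S \<Longrightarrow> \<bar>c k b\<bar> \<le> C"
  shows "\<exists>r d. strict_mono r \<and> (\<forall>b\<in>S. (\<lambda>k. c (r k) b) \<longlonglongrightarrow> d b)"
  using assms
proof (induction S rule: finite_induct)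
  case empty
  then show ?case by (auto intro: strict_mono_id)
next
  case (insert y S)
  then obtain r d where r: "strict_mono r" "\<forall>b\<in>S. (\<lambda>k. c (r k) b) \<longlonglongrightarrow> d b" by auto
  have "bounded (range (\<lambda>k. c (r k) y))"
    using insert.prems by (auto simp: bounded_iff)
  then obtain l r' where r': "strict_mono r'" "((\<lambda>k. c (r k) y) \<circ> r') \<longlonglongrightarrow> l"
    using bounded_imp_convergent_subsequence by blast
  have "(\<lambda>k. c (r (r' k)) b) \<longlonglongrightarrow> (d(y := l)) b" if "b \<in> insert y S" for b
  proof (cases "b = y")
    case True
    then show ?thesis using r'(2) by (simp add: o_def)
  next
    case False
    then have "(\<lambda>k. c (r k) b) \<longlonglongrightarrow> d b" using r(2) that by simp
    from LIMSEQ_subseq_LIMSEQ[OF this r'(1)] False show ?thesis by (simp add: o_def)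
  qed
  moreover have "strict_mono (\<lambda>k. r (r' k))"
    using strict_mono_o[OF r(1) r'(1)] by (simp add: o_def)
  ultimately show ?case by blast
qed

locale tvs_basis =
  fixes B :: "'a::{real_vector,t2_space} set"
  assumes tvs: "is_tvs TYPE('a)" and finite_basis: "finite B" and independent_basis: "independent B"
begin

definition lincomb :: "('a \<Rightarrow> real) \<Rightarrow> 'a" where
  "lincomb c = (\<Sum>b\<in>B. c b *\<^sub>R b)"

definition l1 :: "('a \<Rightarrow> real) \<Rightarrow> real" where
  "l1 c = (\<Sum>b\<in>B. \<bar>c b\<bar>)"

lemma lincomb_in_span: "lincomb c \<in> span B"
  unfolding lincomb_def by (intro span_sum span_scale span_base)

lemma lincomb_diff: "lincomb c - lincomb d = lincomb (\<lambda>b. c b - d b)"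
  unfolding lincomb_def by (simp add: sum_subtractf scaleR_diff_left)

lemma scaleR_lincomb: "s *\<^sub>R lincomb c = lincomb (\<lambda>b. s * c b)"
  unfolding lincomb_def by (simp add: scaleR_sum_right)

lemma coeff_eq_0_if_lincomb_eq_0: "lincomb c = 0 \<Longrightarrow> b \<in> B \<Longrightarrow> c b = 0"
  using independent_basis dependent_finite[OF finite_basis] unfolding lincomb_def by auto

lemma lincomb_representation: "z \<in> span B \<Longrightarrow> lincomb (representation B z) = z"
  unfolding lincomb_def using sum_representation_eq[OF independent_basis _ finite_basis] by auto

lemma tendsto_lincomb:
  assumes "\<And>b. b \<in> B \<Longrightarrow> (\<lambda>k. c k b) \<longlonglongrightarrow> d b"
  shows "(\<lambda>k. lincomb (c k)) \<longlonglongrightarrow> lincomb d"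
  unfolding lincomb_def
  by (rule tvs_tendsto_sum[OF tvs finite_basis])
    (intro tvs_tendsto_scaleR[OF tvs] assms tendsto_const)

lemma abs_le_l1: "b \<in> B \<Longrightarrow> \<bar>c b\<bar> \<le> l1 c"
  unfolding l1_def using finite_basis by (intro member_le_sum) auto

lemma l1_nonneg: "0 \<le> l1 c"
  unfolding l1_def by (simp add: sum_nonneg)

lemma l1_normalize: "0 < l1 c \<Longrightarrow> l1 (\<lambda>b. c b / l1 c) = 1"
  by (simp add: l1_def abs_divide sum_divide_distrib[symmetric])

lemma l1_unit_convergent_subseq:
  fixes d :: "nat \<Rightarrow> 'a \<Rightarrow> real"
  assumes "\<And>k. l1 (d k) = 1"
  obtains r e where "strict_mono r" "lincomb e \<noteq> 0" "\<And>b. b \<in> B \<Longrightarrow> (\<lambda>k. d (r k) b) \<longlonglongrightarrow> e b"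
proof -
  have "\<bar>d k b\<bar> \<le> 1" if "b \<in> B" for k b
    using abs_le_l1[OF that, of "d k"] assms by simp
  then obtain r e where r: "strict_mono r" "\<forall>b\<in>B. (\<lambda>k. d (r k) b) \<longlonglongrightarrow> e b"
    using bounded_coordinates_convergent_subseq[OF finite_basis, of d 1] by blast
  have "(\<lambda>k. l1 (d (r k))) \<longlonglongrightarrow> l1 e"
    unfolding l1_def using r(2) by (intro tendsto_sum tendsto_rabs) auto
  then have "l1 e \<noteq> 0" using assms by (simp add: LIMSEQ_const_iff)
  moreover have "l1 e = 0" if "\<forall>b\<in>B. e b = 0"
    using that unfolding l1_def by (intro sum.neutral) simp
  ultimately obtain b where "b \<in> B" "e b \<noteq> 0" by blast
  then have "lincomb e \<noteq> 0" using coeff_eq_0_if_lincomb_eq_0 by blast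
  then show thesis by (rule that[OF r(1)]) (rule bspec[OF r(2)])
qed

text \<open>Hausdorffness enters here, through uniqueness of limits.\<close>
lemma l1_bounded_below_imp_lincomb_not_null:
  assumes "0 < \<epsilon>" "\<And>k. \<epsilon> \<le> l1 (c k)"
  shows "\<not> (\<lambda>k. lincomb (c k)) \<longlonglongrightarrow> 0"
proof
  assume c_null: "(\<lambda>k. lincomb (c k)) \<longlonglongrightarrow> 0"
  define d where "d k = (\<lambda>b. c k b / l1 (c k))" for k
  have pos: "0 < l1 (c k)" for k using assms(1) assms(2)[of k] by linarith
  have d_unit: "l1 (d k) = 1" for k unfolding d_def by (rule l1_normalize[OF pos])
  obtain r e where r: "strict_mono r" "lincomb e \<noteq> 0" "\<And>b. b \<in> B \<Longrightarrow> (\<lambda>k. d (r k) b) \<longlonglongrightarrow> e b"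
    using l1_unit_convergent_subseq[of d, OF d_unit] by blast
  define t where "t k = 1 / l1 (c (r k))" for k
  have "\<bar>t k\<bar> \<le> 1 / \<epsilon>" for k
    using assms(1) assms(2)[of "r k"] pos[of "r k"] by (simp add: t_def frac_le)
  then have "bounded (range t)" by (auto simp: bounded_iff)
  then obtain s r' where r': "strict_mono r'" "(t \<circ> r') \<longlonglongrightarrow> s"
    using bounded_imp_convergent_subsequence[of t] by blast
  have "(\<lambda>k. t (r' k) *\<^sub>R lincomb (c (r (r' k)))) \<longlonglongrightarrow> s *\<^sub>R 0"
    using r'(2) LIMSEQ_subseq_LIMSEQ[OF c_null strict_mono_o[OF r(1) r'(1)]]
    by (intro tvs_tendsto_scaleR[OF tvs]) (simp_all add: o_def)
  moreover have "t (r' k) *\<^sub>R lincomb (c (r (r' k))) = lincomb (d (r (r' k)))" for k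
    by (simp add: scaleR_lincomb d_def t_def)
  ultimately have "(\<lambda>k. lincomb (d (r (r' k)))) \<longlonglongrightarrow> 0" by simp
  moreover have "(\<lambda>k. lincomb (d (r (r' k)))) \<longlonglongrightarrow> lincomb e"
    using LIMSEQ_subseq_LIMSEQ[OF r(3) r'(1)] by (intro tendsto_lincomb) (simp add: o_def)
  ultimately have "lincomb e = 0" by (rule LIMSEQ_unique[rotated])
  with r(2) show False by blast
qed

lemma lincomb_null_imp_l1_null:
  assumes "(\<lambda>k. lincomb (c k)) \<longlonglongrightarrow> 0"
  shows "(\<lambda>k. l1 (c k)) \<longlonglongrightarrow> 0"
proof (rule ccontr)
  assume "\<not> ?thesis"
  then obtain \<epsilon> where \<epsilon>: "0 < \<epsilon>" "\<forall>N. \<exists>n\<ge>N. \<epsilon> \<le> l1 (c n)"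
    unfolding LIMSEQ_iff by (auto simp: not_less abs_of_nonneg l1_nonneg)
  then have "infinite {n. \<epsilon> \<le> l1 (c n)}" by (simp add: infinite_nat_iff_unbounded_le)
  then obtain r :: "nat \<Rightarrow> nat" where r: "strict_mono r" "\<And>k. r k \<in> {n. \<epsilon> \<le> l1 (c n)}"
    using infinite_enumerate by blast
  define c' where "c' k = c (r k)" for k
  have lim: "(\<lambda>k. lincomb (c' k)) \<longlonglongrightarrow> 0"
    using LIMSEQ_subseq_LIMSEQ[OF assms r(1)] by (simp add: o_def c'_def)
  have bound: "\<epsilon> \<le> l1 (c' k)" for k using r(2) by (simp add: c'_def)
  show False using l1_bounded_below_imp_lincomb_not_null[OF \<epsilon>(1) bound] lim by (rule notE)
qed

lemma representation_tendsto:
  assumes "\<And>k. z k \<in> span B" "w \<in> span B" "z \<longlonglongrightarrow> w" "b \<in> B"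
  shows "(\<lambda>k. representation B (z k) b) \<longlonglongrightarrow> representation B w b"
proof -
  define c where "c k = (\<lambda>b. representation B (z k) b - representation B w b)" for k
  have "lincomb (c k) = z k - w" for k
    using lincomb_diff[symmetric] lincomb_representation assms(1,2) by (simp add: c_def)
  moreover have "(\<lambda>k. z k - w) \<longlonglongrightarrow> 0"
    using tvs_tendsto_diff[OF tvs assms(3) tendsto_const[of w]] by simp
  ultimately have "(\<lambda>k. l1 (c k)) \<longlonglongrightarrow> 0"
    by (intro lincomb_null_imp_l1_null) simp
  then have "(\<lambda>k. c k b) \<longlonglongrightarrow> 0"
    by (rule Lim_null_comparison[rotated]) (simp add: abs_le_l1[OF assms(4)])
  from tendsto_add[OF this tendsto_const[of "representation B w b"]] show ?thesis
    by (simp add: c_def)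
qed

lemma linear_on_sub_tendsto:
  assumes "linear_on_sub (span B) p" "\<And>k. z k \<in> span B" "w \<in> span B" "z \<longlonglongrightarrow> w"
  shows "(\<lambda>k. p (z k)) \<longlonglongrightarrow> p w"
proof -
  have p_scaleR: "p (s *\<^sub>R b) = s * p b" if "b \<in> B" for s b
    using assms(1) span_base[OF that] unfolding linear_on_sub_def by blast
  have p_lincomb: "p (lincomb c) = (\<Sum>b\<in>B. c b * p b)" for c
  proof -
    have "p (lincomb c) = (\<Sum>b\<in>B. p (c b *\<^sub>R b))"
      unfolding lincomb_def
      by (rule linear_on_sub_sum[OF assms(1) subspace_span finite_basis])
        (intro span_scale span_base)
    then show ?thesis by (simp add: p_scaleR)
  qed
  have "(\<lambda>k. p (lincomb (representation B (z k)))) \<longlonglongrightarrow> p (lincomb (representation B w))"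
    unfolding p_lincomb
    by (intro tendsto_sum tendsto_mult tendsto_const representation_tendsto[OF assms(2-4)])
  then show ?thesis using assms(2,3) by (simp add: lincomb_representation)
qed

end

locale normed_tvs_basis = tvs_basis +
  fixes nM :: "'a \<Rightarrow> real"
  assumes norm: "is_norm_on (span B) nM"
begin

lemma nM_nonneg: "x \<in> span B \<Longrightarrow> 0 \<le> nM x"
  using norm unfolding is_norm_on_def by blast

lemma nM_eq_0_iff: "x \<in> span B \<Longrightarrow> nM x = 0 \<longleftrightarrow> x = 0"
  using norm unfolding is_norm_on_def by blast

lemma nM_triangle: "x \<in> span B \<Longrightarrow> y \<in> span B \<Longrightarrow> nM (x + y) \<le> nM x + nM y"
  using norm unfolding is_norm_on_def by blast

lemma nM_scaleR: "x \<in> span B \<Longrightarrow> nM (s *\<^sub>R x) = \<bar>s\<bar> * nM x"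
  using norm unfolding is_norm_on_def by blast

lemma abs_nM_diff_le:
  assumes "x \<in> span B" "y \<in> span B"
  shows "\<bar>nM x - nM y\<bar> \<le> nM (x - y)"
proof -
  have xy: "x - y \<in> span B" using assms by (rule span_diff)
  have "nM x \<le> nM y + nM (x - y)"
    using nM_triangle[OF assms(2) xy] by simp
  moreover have "nM y \<le> nM x + nM (x - y)"
    using nM_triangle[OF assms(1) span_scale[OF xy, of "- 1"]] nM_scaleR[OF xy, of "- 1"] by simp
  ultimately show ?thesis by linarith
qed

lemma nM_lincomb_le: "nM (lincomb c) \<le> (\<Sum>b\<in>B. \<bar>c b\<bar> * nM b)"
proof -
  have "nM (lincomb c) \<le> (\<Sum>b\<in>B. nM (c b *\<^sub>R b))"
    unfolding lincomb_def using norm finite_basis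
    by (intro is_norm_on_sum_le) (auto intro: span_scale span_base subspace_span)
  then show ?thesis by (simp add: nM_scaleR span_base)
qed

lemma nM_lincomb_tendsto:
  assumes "\<And>b. b \<in> B \<Longrightarrow> (\<lambda>k. c k b) \<longlonglongrightarrow> e b"
  shows "(\<lambda>k. nM (lincomb (c k))) \<longlonglongrightarrow> nM (lincomb e)"
proof -
  define g where "g k = (\<Sum>b\<in>B. \<bar>c k b - e b\<bar> * nM b)" for k
  have "g \<longlonglongrightarrow> (\<Sum>b\<in>B. \<bar>e b - e b\<bar> * nM b)"
    unfolding g_def
    by (intro tendsto_sum tendsto_mult tendsto_rabs tendsto_diff assms tendsto_const)
  then have g_null: "g \<longlonglongrightarrow> 0" by simp
  have bound: "\<bar>nM (lincomb (c k)) - nM (lincomb e)\<bar> \<le> g k" for k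
  proof -
    have "\<bar>nM (lincomb (c k)) - nM (lincomb e)\<bar> \<le> nM (lincomb (c k) - lincomb e)"
      by (intro abs_nM_diff_le lincomb_in_span)
    also have "\<dots> \<le> g k"
      unfolding lincomb_diff g_def by (rule nM_lincomb_le)
    finally show ?thesis .
  qed
  have "(\<lambda>k. nM (lincomb (c k)) - nM (lincomb e)) \<longlonglongrightarrow> 0"
    by (rule Lim_null_comparison[OF always_eventually g_null]) (simp add: bound)
  from tendsto_add[OF this tendsto_const[of "nM (lincomb e)"]] show ?thesis by simp
qed

lemma l1_le_nM: "\<exists>m>0. \<forall>c. m * l1 c \<le> nM (lincomb c)"
proof (rule ccontr)
  assume "\<not> ?thesis"
  then have "\<not> (\<forall>c. inverse (real (Suc k)) * l1 c \<le> nM (lincomb c))" for k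
    using positive_imp_inverse_positive[of "real (Suc k)"] by auto
  then have "\<exists>c. nM (lincomb c) < inverse (real (Suc k)) * l1 c" for k
    by (simp add: not_le)
  then obtain c where c: "\<And>k. nM (lincomb (c k)) < inverse (real (Suc k)) * l1 (c k)"
    by metis
  have pos: "0 < l1 (c k)" for k
  proof -
    have "0 < inverse (real (Suc k)) * l1 (c k)"
      using nM_nonneg[OF lincomb_in_span] c[of k] by (rule le_less_trans)
    then show ?thesis by (simp add: zero_less_mult_iff)
  qed
  define d where "d k = (\<lambda>b. c k b / l1 (c k))" for k
  have d_unit: "l1 (d k) = 1" for k unfolding d_def by (rule l1_normalize[OF pos])
  have d_small: "nM (lincomb (d k)) < inverse (real (Suc k))" for k
  proof -
    have "lincomb (d k) = (1 / l1 (c k)) *\<^sub>R lincomb (c k)"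
      by (simp add: scaleR_lincomb d_def)
    then have "nM (lincomb (d k)) = nM (lincomb (c k)) / l1 (c k)"
      using pos[of k] by (simp add: nM_scaleR lincomb_in_span)
    then show ?thesis using c[of k] pos[of k] by (simp add: divide_less_eq)
  qed
  have d_null: "(\<lambda>k. nM (lincomb (d k))) \<longlonglongrightarrow> 0"
  proof (rule Lim_null_comparison[OF always_eventually LIMSEQ_inverse_real_of_nat])
    show "\<forall>k. norm (nM (lincomb (d k))) \<le> inverse (real (Suc k))"
      using d_small nM_nonneg[OF lincomb_in_span] by (simp add: less_imp_le)
  qed
  obtain r e where r: "strict_mono r" "lincomb e \<noteq> 0"
    "\<And>b. b \<in> B \<Longrightarrow> (\<lambda>k. d (r k) b) \<longlonglongrightarrow> e b"
    using l1_unit_convergent_subseq[of d, OF d_unit] by blast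
  have "(\<lambda>k. nM (lincomb (d (r k)))) \<longlonglongrightarrow> 0"
    using LIMSEQ_subseq_LIMSEQ[OF d_null r(1)] by (simp add: o_def)
  moreover have "(\<lambda>k. nM (lincomb (d (r k)))) \<longlonglongrightarrow> nM (lincomb e)"
    using r(3) by (rule nM_lincomb_tendsto)
  ultimately have "nM (lincomb e) = 0" by (rule LIMSEQ_unique[rotated])
  with r(2) show False using nM_eq_0_iff[OF lincomb_in_span] by blast
qed

lemma convergent_imp_nM_bounded:
  assumes "\<And>k. z k \<in> span B" "w \<in> span B" "z \<longlonglongrightarrow> w"
  shows "\<exists>C. \<forall>k. nM (z k) \<le> C"
proof -
  have "(\<lambda>k. nM (lincomb (representation B (z k)))) \<longlonglongrightarrow> nM (lincomb (representation B w))"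
    using representation_tendsto[OF assms] by (rule nM_lincomb_tendsto)
  then have "(\<lambda>k. nM (z k)) \<longlonglongrightarrow> nM w"
    using assms(1,2) by (simp add: lincomb_representation)
  then have "Bseq (\<lambda>k. nM (z k))" by (rule convergent_imp_Bseq[OF convergentI])
  then obtain K where "\<forall>k. norm (nM (z k)) \<le> K" unfolding Bseq_def by blast
  then have "\<forall>k. nM (z k) \<le> K" by (simp add: abs_le_iff)
  then show ?thesis by blast
qed

lemma nM_bounded_imp_convergent_subseq:
  assumes "\<And>k. z k \<in> span B" "\<And>k. nM (z k) \<le> C"
  shows "\<exists>r w. strict_mono (r :: nat \<Rightarrow> nat) \<and> w \<in> span B \<and> (z \<circ> r) \<longlonglongrightarrow> w"
proof -
  obtain m where m: "m > 0" "\<And>c. m * l1 c \<le> nM (lincomb c)" using l1_le_nM by blast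
  have "\<bar>representation B (z k) b\<bar> \<le> C / m" if "b \<in> B" for k b
  proof -
    have "m * l1 (representation B (z k)) \<le> C"
      using m(2)[of "representation B (z k)"] lincomb_representation[OF assms(1)] assms(2)[of k]
      by simp
    then have "l1 (representation B (z k)) \<le> C / m" using m(1) by (simp add: field_simps)
    then show ?thesis using abs_le_l1[OF that, of "representation B (z k)"] by linarith
  qed
  then obtain r d where r: "strict_mono r" "\<forall>b\<in>B. (\<lambda>k. representation B (z (r k)) b) \<longlonglongrightarrow> d b"
    using bounded_coordinates_convergent_subseq[OF finite_basis,
        of "\<lambda>k. representation B (z k)" "C / m"]
    by blast
  have "(\<lambda>k. lincomb (representation B (z (r k)))) \<longlonglongrightarrow> lincomb d"
    using r(2) by (intro tendsto_lincomb) auto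
  then have "(z \<circ> r) \<longlonglongrightarrow> lincomb d" using lincomb_representation[OF assms(1)] by (simp add: o_def)
  then show ?thesis using r(1) lincomb_in_span by blast
qed

lemma limit_in_range_of_nM_escaping:
  assumes "\<And>k. w k \<in> span B" "\<And>k. real k \<le> nM (w k)"
    and "\<And>i. f i \<in> range w" "f \<longlonglongrightarrow> z" "z \<in> span B"
  shows "z \<in> range w"
proof -
  have "f i \<in> span B" for i using assms(1) assms(3)[of i] by auto
  then obtain C where C: "\<And>i. nM (f i) \<le> C"
    using convergent_imp_nM_bounded[of f, OF _ assms(5,4)] by blast
  obtain N :: nat where N: "C \<le> real N" using real_arch_simple by blast
  have "f i \<in> w ` {..N}" for i
  proof -
    obtain k where k: "f i = w k" using assms(3)[of i] by blast
    have "real k \<le> real N" using assms(2)[of k] C[of i] N unfolding k by linarith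
    then show ?thesis using k by auto
  qed
  then have "z \<in> w ` {..N}" by (intro closed_sequentially[OF finite_imp_closed _ assms(4)]) auto
  then show ?thesis by blast
qed

end

section \<open>Optimal payoffs\<close>

lemma usc_atI_sequentially:
  fixes R :: "'a::{real_vector,first_countable_topology} \<Rightarrow> 'a set"
  assumes "\<And>U Ys Zs. openin (top_of_set M) U \<Longrightarrow> R X \<subseteq> U \<Longrightarrow> Ys \<longlonglongrightarrow> X \<Longrightarrow>
      (\<And>n. Zs n \<in> R (Ys n)) \<Longrightarrow> \<exists>n. Zs n \<in> U"
  shows "usc_at M R X"
  unfolding usc_at_def
proof (intro allI impI)
  fix U assume U: "openin (top_of_set M) U \<and> R X \<subseteq> U"
  show "\<exists>V. open V \<and> X \<in> V \<and> (\<forall>Y\<in>V. R Y \<subseteq> U)"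
  proof (rule ccontr)
    assume no_nbhd: "\<not> ?thesis"
    obtain N :: "nat \<Rightarrow> 'a set" where N: "\<And>i. open (N i)" "\<And>i. X \<in> N i"
      "\<And>Ys. \<forall>i. Ys i \<in> N i \<Longrightarrow> Ys \<longlonglongrightarrow> X"
      using first_countable_topology_class.countable_basis[of X] by blast
    have "\<exists>Y Z. Y \<in> N i \<and> Z \<in> R Y \<and> Z \<notin> U" for i
      using no_nbhd N(1,2)[of i] by blast
    then obtain Ys Zs where YZ: "\<And>i. Ys i \<in> N i \<and> Zs i \<in> R (Ys i) \<and> Zs i \<notin> U"
      by metis
    have "Ys \<longlonglongrightarrow> X" using YZ by (intro N(3)) blast
    then have "\<exists>n. Zs n \<in> U" using U YZ by (intro assms) blast+
    then show False using YZ by blast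
  qed
qed

locale optimal_payoff = normed_tvs_basis B nM
  for B :: "'a::{real_vector,t2_space,first_countable_topology} set" and nM +
  fixes p :: "'a \<Rightarrow> real" and A :: "'a set" and U0 :: 'a
  assumes linear_p: "linear_on_sub (span B) p" and closed_A: "closed A"
    and adm_prices_nonempty_bdd:
      "\<And>X. adm_prices (span B) p A X \<noteq> {} \<and> bdd_below (adm_prices (span B) p A X)"
    and continuous_rho: "continuous_on UNIV (rho (span B) p A)"
    and U0_span: "U0 \<in> span B" and p_U0: "p U0 = 1"
begin

abbreviation R :: "'a \<Rightarrow> 'a set" where "R \<equiv> optR (span B) p A"

abbreviation \<rho> :: "'a \<Rightarrow> real" where "\<rho> \<equiv> rho (span B) p A"

definition bounded_on_compacts :: bool where
  "bounded_on_compacts \<longleftrightarrow> (\<forall>K. compact K \<longrightarrow> (\<exists>C. \<forall>Z\<in>(\<Union>X\<in>K. R X). nM Z \<le> C))"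

definition selections_subconverge :: bool where
  "selections_subconverge \<longleftrightarrow> (\<forall>X Xs Zs. Xs \<longlonglongrightarrow> X \<longrightarrow> (\<forall>n. Zs n \<in> R (Xs n)) \<longrightarrow>
     (\<exists>Z r. Z \<in> R X \<and> strict_mono r \<and> (Zs \<circ> r) \<longlonglongrightarrow> Z))"

lemma mem_R_iff: "Z \<in> R X \<longleftrightarrow> Z \<in> span B \<and> X + Z \<in> A \<and> p Z = \<rho> X"
  unfolding optR_def by simp

lemma rho_tendsto: "Xs \<longlonglongrightarrow> X \<Longrightarrow> (\<lambda>n. \<rho> (Xs n)) \<longlonglongrightarrow> \<rho> X"
  using continuous_rho by (simp add: continuous_on_eq_continuous_at isCont_tendsto_compose)

lemma p_add_scaleR_U0: "Z \<in> span B \<Longrightarrow> p (Z + s *\<^sub>R U0) = p Z + s"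
  using linear_p U0_span p_U0 unfolding linear_on_sub_def by (simp add: span_scale)

lemma adm_prices_add_scaleR_U0:
  "adm_prices (span B) p A (X + t *\<^sub>R U0) = (\<lambda>x. - t + x) ` adm_prices (span B) p A X"
proof (intro equalityI subsetI)
  fix x assume "x \<in> adm_prices (span B) p A (X + t *\<^sub>R U0)"
  then obtain Z where Z: "x = p Z" "Z \<in> span B" "X + t *\<^sub>R U0 + Z \<in> A"
    unfolding adm_prices_def by blast
  have "Z + t *\<^sub>R U0 \<in> span B" using Z(2) U0_span by (intro span_add span_scale)
  moreover have "X + (Z + t *\<^sub>R U0) \<in> A" using Z(3) by (simp add: algebra_simps)
  ultimately have "p (Z + t *\<^sub>R U0) \<in> adm_prices (span B) p A X"
    unfolding adm_prices_def by blast
  moreover have "x = - t + p (Z + t *\<^sub>R U0)" using p_add_scaleR_U0[OF Z(2)] Z(1) by simp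
  ultimately show "x \<in> (\<lambda>x. - t + x) ` adm_prices (span B) p A X" by (rule rev_image_eqI)
next
  fix x assume "x \<in> (\<lambda>x. - t + x) ` adm_prices (span B) p A X"
  then obtain Z where Z: "x = - t + p Z" "Z \<in> span B" "X + Z \<in> A"
    unfolding adm_prices_def by blast
  have "Z + (- t) *\<^sub>R U0 \<in> span B" using Z(2) U0_span by (intro span_add span_scale)
  moreover have "X + t *\<^sub>R U0 + (Z + (- t) *\<^sub>R U0) \<in> A" using Z(3) by (simp add: algebra_simps)
  moreover have "x = p (Z + (- t) *\<^sub>R U0)" using p_add_scaleR_U0[OF Z(2), of "- t"] Z(1) by simp
  ultimately show "x \<in> adm_prices (span B) p A (X + t *\<^sub>R U0)"
    unfolding adm_prices_def by blast
qed

lemma rho_cash_additive: "\<rho> (X + t *\<^sub>R U0) = \<rho> X - t"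
  using Inf_add_eq[of "\<lambda>x. x" "adm_prices (span B) p A X" "- t"] adm_prices_nonempty_bdd[of X]
  unfolding rho_def adm_prices_add_scaleR_U0 by simp

lemma not_usc_at_if_escaping_selection:
  assumes "Ys \<longlonglongrightarrow> X" "\<And>k. Ws k \<in> R (Ys k)" "\<And>k. Ws k \<notin> R X" "\<And>k. real k \<le> nM (Ws k)"
  shows "\<not> usc_at (span B) R X"
proof
  assume usc: "usc_at (span B) R X"
  have Ws_span: "Ws k \<in> span B" for k using assms(2)[of k] by (simp add: mem_R_iff)
  define U where "U = span B \<inter> - closure (range Ws)"
  have closure_part: "z \<in> range Ws" if z: "z \<in> span B" "z \<in> closure (range Ws)" for z
  proof -
    obtain f where f: "\<forall>n. f n \<in> range Ws" "f \<longlonglongrightarrow> z"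
      using z(2) unfolding closure_sequential by blast
    show ?thesis
      by (rule limit_in_range_of_nM_escaping[of Ws f z, OF Ws_span assms(4)])
        (use f z(1) in simp_all)
  qed
  have "openin (top_of_set (span B)) U"
    unfolding U_def by (intro openin_open_Int open_Compl closed_closure)
  moreover have "R X \<subseteq> U"
  proof
    fix Z assume Z: "Z \<in> R X"
    then have "Z \<in> span B" by (simp add: mem_R_iff)
    moreover have "Z \<notin> range Ws" using Z assms(3) by auto
    ultimately show "Z \<in> U" unfolding U_def using closure_part by blast
  qed
  ultimately have "\<exists>V. open V \<and> X \<in> V \<and> (\<forall>Y\<in>V. R Y \<subseteq> U)"
    using usc unfolding usc_at_def by simp
  then obtain V where V: "open V" "X \<in> V" "\<forall>Y\<in>V. R Y \<subseteq> U" by blast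
  obtain N where "\<forall>n\<ge>N. Ys n \<in> V"
    using topological_tendstoD[OF assms(1) V(1,2)] unfolding eventually_sequentially by blast
  then have "Ws N \<in> U" using V(3) assms(2)[of N] by blast
  moreover have "Ws N \<in> closure (range Ws)" by (simp add: closure_subset[THEN subsetD])
  ultimately show False unfolding U_def by simp
qed

lemma usc_imp_R_bounded:
  assumes "usc_at (span B) R X"
  shows "\<exists>C. \<forall>Z\<in>R X. nM Z \<le> C"
proof (rule ccontr)
  assume unbounded: "\<not> ?thesis"
  have "\<exists>Z. Z \<in> R X \<and> real k + nM U0 < nM Z" for k :: nat
  proof -
    have "\<not> (\<forall>Z\<in>R X. nM Z \<le> real k + nM U0)" using unbounded by blast
    then show ?thesis by (auto simp: not_le)
  qed
  then obtain Zs where Zs: "\<And>k. Zs k \<in> R X" "\<And>k. real k + nM U0 < nM (Zs k)" by metis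
  define t where "t k = inverse (real (Suc k))" for k
  have t: "0 < t k" "t k \<le> 1" for k unfolding t_def by (auto simp: inverse_le_1_iff)
  define Ys where "Ys k = X + t k *\<^sub>R U0" for k
  define Ws where "Ws k = Zs k - t k *\<^sub>R U0" for k
  have Zs_span: "Zs k \<in> span B" for k using Zs(1) mem_R_iff by blast
  have p_Ws: "p (Ws k) = \<rho> X - t k" for k
    using p_add_scaleR_U0[OF Zs_span[of k], of "- t k"] Zs(1)[of k] mem_R_iff by (simp add: Ws_def)
  have "(\<lambda>k. X + t k *\<^sub>R U0) \<longlonglongrightarrow> X + 0 *\<^sub>R U0"
    unfolding t_def
    by (intro tvs_tendsto_add[OF tvs] tvs_tendsto_scaleR[OF tvs] LIMSEQ_inverse_real_of_nat
        tendsto_const)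
  then have "Ys \<longlonglongrightarrow> X" unfolding Ys_def[abs_def] by simp
  moreover have "Ws k \<in> R (Ys k)" for k
  proof -
    have "Ys k + Ws k = X + Zs k" by (simp add: Ys_def Ws_def)
    moreover have "\<rho> (Ys k) = \<rho> X - t k" unfolding Ys_def by (rule rho_cash_additive)
    moreover have "Ws k \<in> span B"
      unfolding Ws_def using Zs_span U0_span by (intro span_diff span_scale)
    ultimately show ?thesis using Zs(1)[of k] p_Ws[of k] mem_R_iff by simp
  qed
  moreover have "Ws k \<notin> R X" for k using p_Ws[of k] t(1)[of k] mem_R_iff by simp
  moreover have "real k \<le> nM (Ws k)" for k
  proof -
    have "nM (Zs k) \<le> nM (Ws k) + nM (t k *\<^sub>R U0)"
      using nM_triangle[of "Ws k" "t k *\<^sub>R U0"] Zs_span U0_span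
      by (simp add: Ws_def span_diff span_scale)
    also have "nM (t k *\<^sub>R U0) \<le> nM U0"
      using nM_scaleR[OF U0_span] nM_nonneg[OF U0_span] t[of k] by (simp add: mult_left_le_one_le)
    finally show ?thesis using Zs(2)[of k] by simp
  qed
  ultimately have "\<not> usc_at (span B) R X" by (rule not_usc_at_if_escaping_selection)
  then show False using assms by blast
qed

lemma R_unbounded_on_compact:
  assumes "compact K" "\<not> (\<exists>C. \<forall>Z\<in>(\<Union>X\<in>K. R X). nM Z \<le> C)"
  obtains Xs X Zs where "Xs \<longlonglongrightarrow> X" "\<And>k. Zs k \<in> R (Xs k)" "\<And>k. real k \<le> nM (Zs k)"
proof -
  have "\<exists>X Z. X \<in> K \<and> Z \<in> R X \<and> real n < nM Z" for n :: nat
  proof -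
    have "\<not> (\<forall>Z\<in>(\<Union>X\<in>K. R X). nM Z \<le> real n)" using assms(2) by blast
    then show ?thesis by (auto simp: not_le)
  qed
  then obtain Xs Zs where XZ: "\<And>n. Xs n \<in> K" "\<And>n. Zs n \<in> R (Xs n)" "\<And>n. real n < nM (Zs n)"
    by metis
  obtain X r where r: "X \<in> K" "strict_mono r" "(Xs \<circ> r) \<longlonglongrightarrow> X"
    using seq_compactE[OF compact_imp_seq_compact[OF assms(1)], of Xs] XZ(1) by blast
  show thesis
  proof (rule that[OF r(3)])
    show "(Zs \<circ> r) k \<in> R ((Xs \<circ> r) k)" for k using XZ(2) by simp
    show "real k \<le> nM ((Zs \<circ> r) k)" for k
      using seq_suble[OF r(2), of k] XZ(3)[of "r k"] by simp
  qed
qed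

lemma usc_imp_bounded_on_compacts:
  assumes usc: "\<And>X. usc_at (span B) R X"
  shows bounded_on_compacts
  unfolding bounded_on_compacts_def
proof (intro allI impI)
  fix K :: "'a set" assume K: "compact K"
  show "\<exists>C. \<forall>Z\<in>(\<Union>X\<in>K. R X). nM Z \<le> C"
  proof (rule ccontr)
    assume unbounded: "\<not> ?thesis"
    obtain Xs X Zs where XZ: "Xs \<longlonglongrightarrow> X" "\<And>k. Zs k \<in> R (Xs k)" "\<And>k. real k \<le> nM (Zs k)"
      using R_unbounded_on_compact[OF K unbounded] by blast
    obtain C where C: "\<forall>Z\<in>R X. nM Z \<le> C" using usc_imp_R_bounded[OF usc[of X]] by blast
    obtain N :: nat where N: "C < real N" using reals_Archimedean2 by blast
    define Ys where "Ys k = Xs (k + N)" for k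
    define Ws where "Ws k = Zs (k + N)" for k
    have "Ys \<longlonglongrightarrow> X"
      using LIMSEQ_ignore_initial_segment[OF XZ(1), of N] unfolding Ys_def[abs_def] .
    moreover have "Ws k \<in> R (Ys k)" for k unfolding Ws_def Ys_def by (rule XZ(2))
    moreover have "Ws k \<notin> R X" for k
    proof
      assume "Ws k \<in> R X"
      then have "nM (Ws k) \<le> C" using C by blast
      moreover have "real (k + N) \<le> nM (Ws k)" unfolding Ws_def by (rule XZ(3))
      ultimately show False using N by simp
    qed
    moreover have "real k \<le> nM (Ws k)" for k
      using XZ(3)[of "k + N"] by (simp add: Ws_def)
    ultimately have "\<not> usc_at (span B) R X" by (rule not_usc_at_if_escaping_selection)
    then show False using usc by blast
  qed
qed

lemma bounded_on_compacts_imp_selections_subconverge: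
  assumes bounded_on_compacts
  shows selections_subconverge
  unfolding selections_subconverge_def
proof (intro allI impI)
  fix X Xs Zs assume Xs: "Xs \<longlonglongrightarrow> X" and Zs: "\<forall>n. Zs n \<in> R (Xs n)"
  have "compact (insert X (range Xs))"
    using compactin_sequence_with_limit[of euclidean Xs X "range Xs"] Xs by simp
  then obtain C where C: "\<forall>Z\<in>(\<Union>Y\<in>insert X (range Xs). R Y). nM Z \<le> C"
    using assms[unfolded bounded_on_compacts_def, rule_format] by blast
  have Zs_span: "Zs n \<in> span B" for n using Zs by (simp add: mem_R_iff)
  have "nM (Zs n) \<le> C" for n
  proof -
    have "Zs n \<in> (\<Union>Y\<in>insert X (range Xs). R Y)" using Zs by blast
    then show ?thesis using C by blast
  qed
  then obtain r W where r: "strict_mono r" "W \<in> span B" "(Zs \<circ> r) \<longlonglongrightarrow> W"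
    using nM_bounded_imp_convergent_subseq[of Zs C, OF Zs_span] by blast
  have Xr: "(\<lambda>n. Xs (r n)) \<longlonglongrightarrow> X" using LIMSEQ_subseq_LIMSEQ[OF Xs r(1)] by (simp add: o_def)
  have Zr: "(\<lambda>n. Zs (r n)) \<longlonglongrightarrow> W" using r(3) by (simp add: o_def)
  have "X + W \<in> A"
  proof (rule closed_sequentially[OF closed_A _ tvs_tendsto_add[OF tvs Xr Zr]])
    show "Xs (r n) + Zs (r n) \<in> A" for n using Zs by (simp add: mem_R_iff)
  qed
  moreover have "p W = \<rho> X"
  proof (rule LIMSEQ_unique)
    show "(\<lambda>n. p (Zs (r n))) \<longlonglongrightarrow> p W"
      using Zs_span r(2) Zr by (rule linear_on_sub_tendsto[OF linear_p])
    have "p (Zs (r n)) = \<rho> (Xs (r n))" for n using Zs by (simp add: mem_R_iff)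
    then show "(\<lambda>n. p (Zs (r n))) \<longlonglongrightarrow> \<rho> X" using rho_tendsto[OF Xr] by simp
  qed
  ultimately have "W \<in> R X" using r(2) by (simp add: mem_R_iff)
  with r(1,3) show "\<exists>Z r. Z \<in> R X \<and> strict_mono r \<and> (Zs \<circ> r) \<longlonglongrightarrow> Z" by blast
qed

lemma selections_subconverge_imp_bounded_on_compacts:
  assumes selections_subconverge
  shows bounded_on_compacts
  unfolding bounded_on_compacts_def
proof (intro allI impI)
  fix K :: "'a set" assume K: "compact K"
  show "\<exists>C. \<forall>Z\<in>(\<Union>X\<in>K. R X). nM Z \<le> C"
  proof (rule ccontr)
    assume unbounded: "\<not> ?thesis"
    obtain Xs X Zs where XZ: "Xs \<longlonglongrightarrow> X" "\<And>k. Zs k \<in> R (Xs k)" "\<And>k. real k \<le> nM (Zs k)"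
      using R_unbounded_on_compact[OF K unbounded] by blast
    have "\<forall>k. Zs k \<in> R (Xs k)" using XZ(2) by blast
    then obtain Z r where Z: "Z \<in> R X" "strict_mono r" "(Zs \<circ> r) \<longlonglongrightarrow> Z"
      using assms[unfolded selections_subconverge_def, rule_format, OF XZ(1)] by blast
    have Zr_span: "(Zs \<circ> r) k \<in> span B" for k using XZ(2) by (simp add: mem_R_iff)
    have "Z \<in> span B" using Z(1) by (simp add: mem_R_iff)
    then obtain C where C: "\<forall>k. nM ((Zs \<circ> r) k) \<le> C"
      using convergent_imp_nM_bounded[of "Zs \<circ> r" Z, OF Zr_span _ Z(3)] by blast
    obtain N :: nat where N: "C < real N" using reals_Archimedean2 by blast
    have "real N \<le> nM (Zs (r N))"
      using seq_suble[OF Z(2), of N] XZ(3)[of "r N"] by simp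
    then show False using C[rule_format, of N] N by simp
  qed
qed

lemma selections_subconverge_imp_usc:
  assumes selections_subconverge
  shows "usc_at (span B) R X"
proof (rule usc_atI_sequentially)
  fix U Ys Zs
  assume U: "openin (top_of_set (span B)) U" "R X \<subseteq> U"
    and Ys: "Ys \<longlonglongrightarrow> X" and Zs: "\<And>n. Zs n \<in> R (Ys n)"
  have "\<forall>n. Zs n \<in> R (Ys n)" using Zs by blast
  then obtain Z r where Z: "Z \<in> R X" "strict_mono r" "(Zs \<circ> r) \<longlonglongrightarrow> Z"
    using assms[unfolded selections_subconverge_def, rule_format, OF Ys] by blast
  obtain T where T: "open T" "U = span B \<inter> T" using U(1) unfolding openin_open by blast
  have "Z \<in> T" using Z(1) U(2) T(2) by blast
  then obtain N where "\<forall>n\<ge>N. Zs (r n) \<in> T"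
    using topological_tendstoD[OF Z(3) T(1)] unfolding eventually_sequentially by auto
  then have "Zs (r N) \<in> T" by blast
  moreover have "Zs (r N) \<in> span B" using Zs by (simp add: mem_R_iff)
  ultimately show "\<exists>n. Zs n \<in> U" using T(2) by blast
qed

lemma usc_iff_bounded_on_compacts: "(\<forall>X. usc_at (span B) R X) \<longleftrightarrow> bounded_on_compacts"
  using usc_imp_bounded_on_compacts bounded_on_compacts_imp_selections_subconverge
    selections_subconverge_imp_usc by blast

lemma bounded_on_compacts_iff_selections_subconverge:
  "bounded_on_compacts \<longleftrightarrow> selections_subconverge"
  using bounded_on_compacts_imp_selections_subconverge
    selections_subconverge_imp_bounded_on_compacts by blast

end

theorem mainTheorem15:
  fixes ge :: "'a::{real_vector,t2_space,first_countable_topology} \<Rightarrow> 'a \<Rightarrow> bool"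
    and M :: "'a set" and \<pi> :: "'a \<Rightarrow> real" and A :: "'a set" and nM :: "'a \<Rightarrow> real"
  assumes tvs: "is_tvs TYPE('a)"
    and lc: "is_locally_convex TYPE('a)"
    and po_refl: "\<And>x. ge x x"
    and po_antisym: "\<And>x y. ge x y \<Longrightarrow> ge y x \<Longrightarrow> x = y"
    and po_trans: "\<And>x y z. ge x y \<Longrightarrow> ge y z \<Longrightarrow> ge x z"
    and M_sub: "subspace M"
    and M_fin: "\<exists>B. finite B \<and> span B = M"
    and M_dim: "1 < dim M"
    and nM: "is_norm_on M nM"
    and \<pi>_lin: "linear_on_sub M \<pi>"
    and A1: "\<exists>U\<in>M. ge U 0 \<and> \<pi> U = 1"
    and A2_closed: "closed A" and A2_zero: "0 \<in> A" and A2_proper: "A \<noteq> UNIV"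
    and A2_mono: "\<And>X P. X \<in> A \<Longrightarrow> ge P 0 \<Longrightarrow> X + P \<in> A"
    and A3_finite: "\<And>X. adm_prices M \<pi> A X \<noteq> {} \<and> bdd_below (adm_prices M \<pi> A X)"
    and A3_cont: "continuous_on UNIV (rho M \<pi> A)"
  shows "((\<forall>X. usc_at M (optR M \<pi> A) X)
          \<longleftrightarrow> (\<forall>K. compact K \<longrightarrow> (\<exists>C. \<forall>Z\<in>(\<Union>X\<in>K. optR M \<pi> A X). nM Z \<le> C)))
       \<and> ((\<forall>K. compact K \<longrightarrow> (\<exists>C. \<forall>Z\<in>(\<Union>X\<in>K. optR M \<pi> A X). nM Z \<le> C))
          \<longleftrightarrow> (\<forall>X Xs Zs. Xs \<longlonglongrightarrow> X \<longrightarrow> (\<forall>n. Zs n \<in> optR M \<pi> A (Xs n)) \<longrightarrow>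
                (\<exists>Z r. Z \<in> optR M \<pi> A X \<and> strict_mono r \<and> (Zs \<circ> r) \<longlonglongrightarrow> Z)))"
proof -
  obtain S where S: "finite S" "span S = M" using M_fin by blast
  obtain B where B: "B \<subseteq> M" "independent B" "M \<subseteq> span B"
    using maximal_independent_subset[of M] by blast
  have "finite B" using independent_span_bound[OF S(1) B(2)] B(1) S(2) by blast
  have M_eq: "M = span B" using span_subspace[OF B(1) B(3) M_sub] by simp
  obtain U0 where U0: "U0 \<in> M" "\<pi> U0 = 1" using A1 by blast
  interpret optimal_payoff B nM \<pi> A U0
    by unfold_locales
      (use tvs \<open>finite B\<close> B(2) nM \<pi>_lin A2_closed A3_finite A3_cont U0 in \<open>simp_all add: M_eq\<close>)
  show ?thesis
    using usc_iff_bounded_on_compacts bounded_on_compacts_iff_selections_subconverge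
    unfolding bounded_on_compacts_def selections_subconverge_def M_eq by (rule conjI)
qed

end
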